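(* Let $\alpha>0$, $\beta,\eta,\kappa\in\mathbb{R}$, $\rho>0$, $p\geq 1$, and $0\le a<x$. Let $f,g$ be two positive functions on $[0,\infty)$ with $f,g\in X^{p}_{c}(a,x)$ (for some $c\in\mathbb{R}$), such that ${}^{\rho}\mathcal{I}^{\alpha,\beta}_{a+,\eta,\kappa}f^{p}(x)<\infty$ and ${}^{\rho}\mathcal{I}^{\alpha,\beta}_{a+,\eta,\kappa}g^{p}(x)<\infty$. If there are real numbers $m,M>0$ with $0<m\leq \frac{f(t)}{g(t)}\leq M$ for all $t\in[a,x]$, then $$\left({}^{\rho}\mathcal{I}^{\alpha,\beta}_{a+,\eta,\kappa}f^{p}(x)\right)^{2/p}+\left({}^{\rho}\mathcal{I}^{\alpha,\beta}_{a+,\eta,\kappa}g^{p}(x)\right)^{2/p}\geq c_{2}\left({}^{\rho}\mathcal{I}^{\alpha,\beta}_{a+,\eta,\kappa}f^{p}(x)\right)^{1/p}\left({}^{\rho}\mathcal{I}^{\alpha,\beta}_{a+,\eta,\kappa}g^{p}(x)\right)^{1/p},$$ where $c_{2}=\frac{(M+1)(m+1)}{M}-2$.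
   Context: For $c\in\mathbb{R}$ and $1\le p<\infty$, $X^{p}_{c}(a,b)$ denotes the space of Lebesgue measurable functions $f$ on $(a,b)$ with $\left(\int_a^b |t^{c}f(t)|^{p}\,\frac{dt}{t}\right)^{1/p}<\infty$. For $\alpha>0$, $\beta,\eta,\kappa\in\mathbb{R}$, $\rho>0$, $0\le a<x$, and a function $\varphi$, the generalized (Katugampola) fractional integral is $${}^{\rho}\mathcal{I}^{\alpha,\beta}_{a+,\eta,\kappa}\varphi(x)=\frac{\rho^{1-\beta}x^{\kappa}}{\Gamma(\alpha)}\int_{a}^{x}\frac{\tau^{\rho(\eta+1)-1}}{(x^{\rho}-\tau^{\rho})^{1-\alpha}}\varphi(\tau)\,d\tau,$$ whenever the integral exists. Notation such as ${}^{\rho}\mathcal{I}^{\alpha,\beta}_{a+,\eta,\kappa}f^{p}(x)$ means the operator applied to the function $\tau\mapsto f(\tau)^p$, evaluated at $x$. *)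

theory Defs
  imports "HOL-Analysis.Analysis"
begin

definition Xpc :: "real \<Rightarrow> real \<Rightarrow> real \<Rightarrow> real \<Rightarrow> (real \<Rightarrow> real) \<Rightarrow> bool" where
  "Xpc c p a b f \<longleftrightarrow>
     set_borel_measurable lebesgue {a<..<b} f \<and>
     set_integrable lebesgue {a<..<b} (\<lambda>t. \<bar>t powr c * f t\<bar> powr p / t)"

definition kat_kernel :: "real \<Rightarrow> real \<Rightarrow> real \<Rightarrow> real \<Rightarrow> real \<Rightarrow> real" where
  "kat_kernel \<rho> \<alpha> \<eta> x \<tau> = \<tau> powr (\<rho> * (\<eta> + 1) - 1) / (x powr \<rho> - \<tau> powr \<rho>) powr (1 - \<alpha>)"

definition kat_int :: "real \<Rightarrow> real \<Rightarrow> real \<Rightarrow> real \<Rightarrow> real \<Rightarrow> real \<Rightarrow> (real \<Rightarrow> real) \<Rightarrow> real \<Rightarrow> real" where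
  "kat_int \<rho> \<alpha> \<beta> \<eta> \<kappa> a \<phi> x =
     \<rho> powr (1 - \<beta>) * x powr \<kappa> / Gamma \<alpha> *
     (LINT \<tau>:{a<..<x}|lebesgue. kat_kernel \<rho> \<alpha> \<eta> x \<tau> * \<phi> \<tau>)"

text \<open>The integral exists and is finite: the integrand is Lebesgue integrable on (a,x).\<close>
definition kat_finite :: "real \<Rightarrow> real \<Rightarrow> real \<Rightarrow> real \<Rightarrow> (real \<Rightarrow> real) \<Rightarrow> real \<Rightarrow> bool" where
  "kat_finite \<rho> \<alpha> \<eta> a \<phi> x \<longleftrightarrow>
     set_integrable lebesgue {a<..<x} (\<lambda>\<tau>. kat_kernel \<rho> \<alpha> \<eta> x \<tau> * \<phi> \<tau>)"

end

theory Submission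
  imports Defs
begin

text \<open>Write u and v for the 1/p-th powers of the two fractional integrals. The ratio
  bound on f/g passes through the positive kernel of the integral, so m v \<le> u \<le> M v.
  Hence (M + 1) u \<le> M (u + v) and (m + 1) v \<le> u + v; multiplying these gives
  (M + 1)(m + 1) u v / M \<le> (u + v)^2, which is the claim.\<close>

lemma sum_squares_ge_of_ratio_bounds:
  fixes u v m M :: real
  assumes "M > 0" "m \<ge> -1" "v \<ge> 0" "m * v \<le> u" "u \<le> M * v"
  shows "((M + 1) * (m + 1) / M - 2) * u * v \<le> u\<^sup>2 + v\<^sup>2"
proof -
  have upper: "(M + 1) * u \<le> M * (u + v)" using assms by (simp add: algebra_simps)
  have lower: "(m + 1) * v \<le> u + v" using assms by (simp add: algebra_simps)
  have "0 \<le> (m + 1) * v" using assms by simp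
  with lower have "0 \<le> u + v" by linarith
  have "(M + 1) * u * ((m + 1) * v) \<le> M * (u + v) * (u + v)"
    using assms \<open>0 \<le> u + v\<close> by (intro mult_mono[OF upper lower] mult_nonneg_nonneg) auto
  then have "(M + 1) * (m + 1) / M * u * v \<le> (u + v)\<^sup>2"
    using assms by (simp add: field_simps power2_eq_square)
  then show ?thesis by (simp add: algebra_simps power2_eq_square)
qed

lemma powr_bounds_of_ratio_bounds:
  fixes f g m M p :: real
  assumes "g > 0" "m \<ge> 0" "p \<ge> 0" "m \<le> f / g" "f / g \<le> M"
  shows "m powr p * g powr p \<le> f powr p \<and> f powr p \<le> M powr p * g powr p"
proof -
  have "m * g \<le> f" "f \<le> M * g"
    using assms by (auto simp: pos_le_divide_eq pos_divide_le_eq)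
  moreover have "M \<ge> 0" using assms by linarith
  moreover have "f \<ge> 0"
    using \<open>m * g \<le> f\<close> assms by (meson less_imp_le mult_nonneg_nonneg order_trans)
  ultimately have "(m * g) powr p \<le> f powr p" "f powr p \<le> (M * g) powr p"
    using assms by (auto intro!: powr_mono2)
  then show ?thesis using assms \<open>M \<ge> 0\<close> by (simp add: powr_mult)
qed

lemma powr_inverse_mult_powr:
  fixes c y p :: real
  assumes "c \<ge> 0" "y \<ge> 0" "p > 0"
  shows "(c powr p * y) powr (1 / p) = c * y powr (1 / p)"
  using assms by (simp add: powr_mult powr_powr)

lemma kat_kernel_nonneg: "kat_kernel \<rho> \<alpha> \<eta> x \<tau> \<ge> 0"
  unfolding kat_kernel_def by simp

lemma kat_finite_cmult:
  "kat_finite \<rho> \<alpha> \<eta> a \<phi> x \<Longrightarrow> kat_finite \<rho> \<alpha> \<eta> a (\<lambda>t. c * \<phi> t) x"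
  unfolding kat_finite_def mult.left_commute[of "kat_kernel \<rho> \<alpha> \<eta> x _" c]
  by (rule set_integrable_mult_right)

lemma kat_int_cmult:
  "kat_int \<rho> \<alpha> \<beta> \<eta> \<kappa> a (\<lambda>t. c * \<phi> t) x = c * kat_int \<rho> \<alpha> \<beta> \<eta> \<kappa> a \<phi> x"
  unfolding kat_int_def
  by (simp add: mult.left_commute[of "kat_kernel \<rho> \<alpha> \<eta> x _"] set_integral_mult_right)

lemma kat_int_mono:
  assumes "\<alpha> > 0" "kat_finite \<rho> \<alpha> \<eta> a \<phi> x" "kat_finite \<rho> \<alpha> \<eta> a \<psi> x"
    and "\<And>\<tau>. \<tau> \<in> {a<..<x} \<Longrightarrow> \<phi> \<tau> \<le> \<psi> \<tau>"
  shows "kat_int \<rho> \<alpha> \<beta> \<eta> \<kappa> a \<phi> x \<le> kat_int \<rho> \<alpha> \<beta> \<eta> \<kappa> a \<psi> x"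
proof -
  have "(LINT \<tau>:{a<..<x}|lebesgue. kat_kernel \<rho> \<alpha> \<eta> x \<tau> * \<phi> \<tau>)
      \<le> (LINT \<tau>:{a<..<x}|lebesgue. kat_kernel \<rho> \<alpha> \<eta> x \<tau> * \<psi> \<tau>)"
    using assms kat_kernel_nonneg unfolding kat_finite_def
    by (intro set_integral_mono) (auto intro: mult_left_mono)
  moreover have "\<rho> powr (1 - \<beta>) * x powr \<kappa> / Gamma \<alpha> \<ge> 0"
    using \<open>\<alpha> > 0\<close> by (simp add: Gamma_real_pos)
  ultimately show ?thesis unfolding kat_int_def by (rule mult_left_mono)
qed

lemma kat_int_nonneg:
  assumes "\<alpha> > 0" "kat_finite \<rho> \<alpha> \<eta> a \<phi> x" "\<And>\<tau>. \<tau> \<in> {a<..<x} \<Longrightarrow> \<phi> \<tau> \<ge> 0"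
  shows "kat_int \<rho> \<alpha> \<beta> \<eta> \<kappa> a \<phi> x \<ge> 0"
proof -
  have "kat_int \<rho> \<alpha> \<beta> \<eta> \<kappa> a (\<lambda>t. 0 * \<phi> t) x \<le> kat_int \<rho> \<alpha> \<beta> \<eta> \<kappa> a \<phi> x"
    using kat_finite_cmult[OF assms(2), of 0] assms by (intro kat_int_mono) auto
  then show ?thesis unfolding kat_int_cmult by simp
qed

theorem theorem9:
  fixes \<alpha> \<beta> \<eta> \<kappa> \<rho> p a x c m M :: real
    and f g :: "real \<Rightarrow> real"
  assumes "\<alpha> > 0" and "\<rho> > 0" and "p \<ge> 1" and "0 \<le> a" and "a < x"
    and "\<And>t. t \<ge> 0 \<Longrightarrow> f t > 0" and "\<And>t. t \<ge> 0 \<Longrightarrow> g t > 0"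
    and "Xpc c p a x f" and "Xpc c p a x g"
    and "kat_finite \<rho> \<alpha> \<eta> a (\<lambda>t. f t powr p) x"
    and "kat_finite \<rho> \<alpha> \<eta> a (\<lambda>t. g t powr p) x"
    and "m > 0" and "M > 0"
    and "\<And>t. t \<in> {a..x} \<Longrightarrow> m \<le> f t / g t \<and> f t / g t \<le> M"
  shows "(kat_int \<rho> \<alpha> \<beta> \<eta> \<kappa> a (\<lambda>t. f t powr p) x) powr (2 / p)
         + (kat_int \<rho> \<alpha> \<beta> \<eta> \<kappa> a (\<lambda>t. g t powr p) x) powr (2 / p)
         \<ge> ((M + 1) * (m + 1) / M - 2)
           * (kat_int \<rho> \<alpha> \<beta> \<eta> \<kappa> a (\<lambda>t. f t powr p) x) powr (1 / p)
           * (kat_int \<rho> \<alpha> \<beta> \<eta> \<kappa> a (\<lambda>t. g t powr p) x) powr (1 / p)"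
proof -
  define F where "F = kat_int \<rho> \<alpha> \<beta> \<eta> \<kappa> a (\<lambda>t. f t powr p) x"
  define G where "G = kat_int \<rho> \<alpha> \<beta> \<eta> \<kappa> a (\<lambda>t. g t powr p) x"
  have "p > 0" using \<open>p \<ge> 1\<close> by linarith
  have pointwise: "m powr p * g \<tau> powr p \<le> f \<tau> powr p \<and> f \<tau> powr p \<le> M powr p * g \<tau> powr p"
    if "\<tau> \<in> {a<..<x}" for \<tau>
    using that \<open>p > 0\<close> assms(4,7,12,14) by (intro powr_bounds_of_ratio_bounds) auto
  have "m powr p * G \<le> F" "F \<le> M powr p * G"
    unfolding F_def G_def using pointwise assms(1,10,11)
    by (auto simp flip: kat_int_cmult intro!: kat_int_mono kat_finite_cmult)
  moreover have "F \<ge> 0" "G \<ge> 0"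
    unfolding F_def G_def using assms(1,10,11) by (auto intro: kat_int_nonneg)
  ultimately have "m * G powr (1 / p) \<le> F powr (1 / p)" "F powr (1 / p) \<le> M * G powr (1 / p)"
    using \<open>p > 0\<close> assms(12,13)
    by (auto simp flip: powr_inverse_mult_powr intro!: powr_mono2)
  then have "((M + 1) * (m + 1) / M - 2) * F powr (1 / p) * G powr (1 / p)
      \<le> (F powr (1 / p))\<^sup>2 + (G powr (1 / p))\<^sup>2"
    using assms(12,13) by (intro sum_squares_ge_of_ratio_bounds) auto
  moreover have "F powr (2 / p) = (F powr (1 / p))\<^sup>2" "G powr (2 / p) = (G powr (1 / p))\<^sup>2"
    by (simp_all add: power2_eq_square flip: powr_add)
  ultimately show ?thesis by (fold F_def G_def) linarith
qed

end
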